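(* Let $0<r_1<r_2<r_3$ satisfy \[ r_2(r_3-r_1)^3 - r_1(r_3+r_2)^3 - r_3(r_1+r_2)^3 \ \ge\ 0 . \] Then for every $\theta\in[0,\pi]$ we have $g_{13}(\theta)\le g_{12}(\theta)$ and $g_{13}(\theta)\le g_{23}(\theta)$.
   Context: For $i,j\in\{1,2,3\}$ and $\theta\in\mathbb R$ set $D_{ij}(\theta)=r_i^2+r_j^2-2r_ir_j\cos\theta$ and $g_{ij}(\theta)=\dfrac{r_ir_j\sin\theta}{D_{ij}(\theta)^{3/2}}$. *)

theory Defs
  imports Complex_Main
begin

definition D :: "real \<Rightarrow> real \<Rightarrow> real \<Rightarrow> real" where
  "D ri rj \<theta> = ri\<^sup>2 + rj\<^sup>2 - 2 * ri * rj * cos \<theta>"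

definition g :: "real \<Rightarrow> real \<Rightarrow> real \<Rightarrow> real" where
  "g ri rj \<theta> = ri * rj * sin \<theta> / (D ri rj \<theta>) powr (3/2)"

end

theory Submission
  imports Defs
begin

text \<open>Since \<open>-1 \<le> cos \<theta> \<le> 1\<close>, \<open>sqrt (D r\<^sub>i r\<^sub>j \<theta>)\<close> lies between
  \<open>r\<^sub>j - r\<^sub>i\<close> and \<open>r\<^sub>i + r\<^sub>j\<close>. Bounding the denominator of \<open>g\<^sub>1\<^sub>3\<close> from below by
  \<open>(r\<^sub>3 - r\<^sub>1)\<^sup>3\<close> and those of \<open>g\<^sub>1\<^sub>2\<close>, \<open>g\<^sub>2\<^sub>3\<close> from above by \<open>(r\<^sub>1 + r\<^sub>2)\<^sup>3\<close>,
  \<open>(r\<^sub>2 + r\<^sub>3)\<^sup>3\<close> reduces both inequalities, uniformly in \<open>\<theta>\<close>, to the hypothesis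
  on \<open>r\<^sub>1, r\<^sub>2, r\<^sub>3\<close>.\<close>

lemma powr_three_halves_power2:
  fixes x :: real
  assumes "0 \<le> x"
  shows "(x\<^sup>2) powr (3/2) = x ^ 3"
proof (cases "x = 0")
  case False
  with assms have "0 < x" by simp
  then have "(x\<^sup>2) powr (3/2) = (x powr 2) powr (3/2)"
    by (simp add: powr_realpow)
  also have "\<dots> = x powr (real 3)"
    by (simp add: powr_powr)
  also have "\<dots> = x ^ 3"
    using \<open>0 < x\<close> by (rule powr_realpow)
  finally show ?thesis .
qed simp

lemma D_ge_diff_square:
  assumes "0 \<le> a" "0 \<le> b"
  shows "(b - a)\<^sup>2 \<le> D a b t"
  using mult_left_mono [OF cos_le_one, of "a * b" t] assms
  unfolding D_def by (simp add: power2_eq_square algebra_simps)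

lemma D_le_sum_square:
  assumes "0 \<le> a" "0 \<le> b"
  shows "D a b t \<le> (a + b)\<^sup>2"
  using mult_left_mono [OF cos_ge_minus_one, of "a * b" t] assms
  unfolding D_def by (simp add: power2_eq_square algebra_simps)

lemma D_pos:
  assumes "0 \<le> a" "a < b"
  shows "0 < D a b t"
  using D_ge_diff_square [of a b t] assms
  by (smt (verit) zero_less_power2)

lemma D_powr_ge_diff_cube:
  assumes "0 \<le> a" "a \<le> b"
  shows "(b - a) ^ 3 \<le> D a b t powr (3/2)"
proof -
  have "(b - a) ^ 3 = ((b - a)\<^sup>2) powr (3/2)"
    using assms by (simp add: powr_three_halves_power2)
  also have "\<dots> \<le> D a b t powr (3/2)"
    using D_ge_diff_square [of a b t] assms by (intro powr_mono2) auto
  finally show ?thesis .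
qed

lemma D_powr_le_sum_cube:
  assumes "0 \<le> a" "a < b"
  shows "D a b t powr (3/2) \<le> (a + b) ^ 3"
proof -
  have "D a b t powr (3/2) \<le> ((a + b)\<^sup>2) powr (3/2)"
    using D_le_sum_square [of a b t] D_pos [of a b t] assms by (intro powr_mono2) auto
  also have "\<dots> = (a + b) ^ 3"
    using assms by (simp add: powr_three_halves_power2)
  finally show ?thesis .
qed

lemma g_le_g_cross:
  assumes "0 \<le> sin t" "0 < D a b t" "0 < D c d t"
    and "a * b * D c d t powr (3/2) \<le> c * d * D a b t powr (3/2)"
  shows "g a b t \<le> g c d t"
proof -
  have "sin t * (a * b * D c d t powr (3/2)) \<le> sin t * (c * d * D a b t powr (3/2))"
    using assms by (intro mult_left_mono) auto
  then show ?thesis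
    using assms(2,3) unfolding g_def by (simp add: divide_simps algebra_simps)
qed

theorem lemma2p3:
  fixes r1 r2 r3 \<theta> :: real
  assumes "0 < r1" "r1 < r2" "r2 < r3"
    and "r2 * (r3 - r1)^3 - r1 * (r3 + r2)^3 - r3 * (r1 + r2)^3 \<ge> 0"
    and "0 \<le> \<theta>" "\<theta> \<le> pi"
  shows "g r1 r3 \<theta> \<le> g r1 r2 \<theta> \<and> g r1 r3 \<theta> \<le> g r2 r3 \<theta>"
proof
  have sin: "0 \<le> sin \<theta>"
    using assms(5,6) by (rule sin_ge_zero)
  have "0 \<le> r1 * (r3 + r2) ^ 3" "0 \<le> r3 * (r1 + r2) ^ 3"
    using assms(1-3) by simp_all
  then have hyp12: "r3 * (r1 + r2) ^ 3 \<le> r2 * (r3 - r1) ^ 3"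
    and hyp23: "r1 * (r3 + r2) ^ 3 \<le> r2 * (r3 - r1) ^ 3"
    using assms(4) by linarith+
  have outer: "r2 * (r3 - r1) ^ 3 \<le> r2 * D r1 r3 \<theta> powr (3/2)"
    using D_powr_ge_diff_cube [of r1 r3 \<theta>] assms(1-3) by simp
  have "r1 * r3 * D r1 r2 \<theta> powr (3/2) \<le> r1 * (r3 * (r1 + r2) ^ 3)"
    using D_powr_le_sum_cube [of r1 r2 \<theta>] assms(1-3) by simp
  also have "\<dots> \<le> r1 * (r2 * (r3 - r1) ^ 3)"
    using hyp12 assms(1) by simp
  also have "\<dots> \<le> r1 * r2 * D r1 r3 \<theta> powr (3/2)"
    using outer assms(1) by (simp add: mult.assoc)
  finally show "g r1 r3 \<theta> \<le> g r1 r2 \<theta>"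
    using sin D_pos assms(1-3) by (intro g_le_g_cross) auto
  have "r1 * r3 * D r2 r3 \<theta> powr (3/2) \<le> r3 * (r1 * (r3 + r2) ^ 3)"
    using D_powr_le_sum_cube [of r2 r3 \<theta>] assms(1-3) by (simp add: add.commute)
  also have "\<dots> \<le> r3 * (r2 * (r3 - r1) ^ 3)"
    using hyp23 assms(1-3) by simp
  also have "\<dots> \<le> r2 * r3 * D r1 r3 \<theta> powr (3/2)"
    using outer assms(1-3) by (simp add: algebra_simps)
  finally show "g r1 r3 \<theta> \<le> g r2 r3 \<theta>"
    using sin D_pos assms(1-3) by (intro g_le_g_cross) auto
qed

end
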